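(* Let $d\ge 2$, $n\ge 2$, $M=(d-1)(n-1)$, and orient the $M$-cells and $(M-1)$-cells of $X(d,n)$ so that the $\mathfrak S_n$-action changes orientations according to $\operatorname{sgn}^{d-1}$ and the cellular boundary of each $M$-cell is the sum of the $(M-1)$-cells in its boundary with coefficients $+1$. Let $b$ be any $\mathfrak S_n$-equivariant integral cellular $(M-1)$-cochain on $X(d,n)$ with values in $\mathcal Z$. Then there are integers $x_1,\dots,x_{n-1}$ (namely $x_j$ is the value of $b$ on the oriented $(M-1)$-cells $\check c(\sigma_1\prec_d\cdots\sigma_j\prec_{d-1}\sigma_{j+1}\cdots\prec_d\sigma_n)$, which is independent of $\sigma$) such that the coboundary $\delta b$ takes the value \[ x_1\binom n1+x_2\binom n2+\dots+x_{n-1}\binom n{n-1} \] on every oriented $M$-cell of $X(d,n)$.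
   Context: $X(d,n)$ is the regular CW complex with cells $\check c(\sigma,\mathbf i)$ indexed by strings $(\sigma_1\prec_{i_1}\cdots\prec_{i_{n-1}}\sigma_n)$, $\sigma\in\mathfrak S_n$, $\mathbf i\in\{1,\dots,d\}^{n-1}$, of dimension $\sum_j i_j-(n-1)$; $\mathfrak S_n$ acts freely by $\pi\cdot(\sigma,\mathbf i)=(\pi\sigma,\mathbf i)$. Face relation: $(\sigma,\mathbf i)\preceq(\sigma',\mathbf i')$ iff for all letters $a$ before $b$ in $\sigma'$: either $a$ before $b$ in $\sigma$ with $m_{\sigma,\mathbf i}(a,b)\le m_{\sigma',\mathbf i'}(a,b)$, or $b$ before $a$ in $\sigma$ with $m_{\sigma,\mathbf i}(a,b)<m_{\sigma',\mathbf i'}(a,b)$, where for letters at positions $p<q$ of $\sigma$, $m_{\sigma,\mathbf i}=\min\{i_p,\dots,i_{q-1}\}$. In particular the $M$-cells are $\check c(\sigma_1\prec_d\cdots\prec_d\sigma_n)$, the $(M-1)$-cells are $\check c(\sigma_1\prec_d\cdots\sigma_j\prec_{d-1}\sigma_{j+1}\cdots\prec_d\sigma_n)$, $1\le j<n$. $\mathcal Z\cong\mathbb Z$ is the $\mathfrak S_n$-module $H_{M-1}(S(W_n^{\oplus(d-1)});\mathbb Z)$, on which $\pi$ acts by multiplication by $(\operatorname{sgn}\pi)^{d-1}$; an equivariant cochain $b$ satisfies $b(\pi\cdot c)=\pi\cdot b(c)$ for oriented cells $c$. *)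

theory Defs
  imports "HOL-Combinatorics.Permutations"
begin

text \<open>Cells of X(d,n) are indexed by strings (sigma, i): sigma is a word listing
the letters 1..n exactly once, i is a list of length n-1 with entries in {1..d}
(i ! (p-1) is the index i_p, 0-based positions in the lists).\<close>

type_synonym cell = "nat list \<times> nat list"

definition is_perm_word :: "nat \<Rightarrow> nat list \<Rightarrow> bool" where
  "is_perm_word n \<sigma> \<longleftrightarrow> distinct \<sigma> \<and> set \<sigma> = {1..n}"

definition cells :: "nat \<Rightarrow> nat \<Rightarrow> cell set" where
  "cells d n = {(\<sigma>, i). is_perm_word n \<sigma> \<and> length i = n - 1 \<and> (\<forall>k\<in>set i. 1 \<le> k \<and> k \<le> d)}"

definition cell_dim :: "nat \<Rightarrow> cell \<Rightarrow> nat" where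
  "cell_dim n c = sum_list (snd c) - (n - 1)"

definition pos :: "nat list \<Rightarrow> nat \<Rightarrow> nat" where
  "pos \<sigma> a = (LEAST k. k < length \<sigma> \<and> \<sigma> ! k = a)"

definition mval :: "nat list \<Rightarrow> nat list \<Rightarrow> nat \<Rightarrow> nat \<Rightarrow> nat" where
  "mval \<sigma> i a b = (let p = min (pos \<sigma> a) (pos \<sigma> b); q = max (pos \<sigma> a) (pos \<sigma> b)
                   in Min ((\<lambda>k. i ! k) ` {p..<q}))"

definition before :: "nat list \<Rightarrow> nat \<Rightarrow> nat \<Rightarrow> bool" where
  "before \<sigma> a b \<longleftrightarrow> pos \<sigma> a < pos \<sigma> b"

definition face :: "cell \<Rightarrow> cell \<Rightarrow> bool" where
  "face c c' \<longleftrightarrow> (case c of (\<sigma>, i) \<Rightarrow> case c' of (\<sigma>', i') \<Rightarrow>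
     (\<forall>a\<in>set \<sigma>'. \<forall>b\<in>set \<sigma>'. before \<sigma>' a b \<longrightarrow>
        ((before \<sigma> a b \<and> mval \<sigma> i a b \<le> mval \<sigma>' i' a b) \<or>
         (before \<sigma> b a \<and> mval \<sigma> i a b < mval \<sigma>' i' a b))))"

definition cell_act :: "(nat \<Rightarrow> nat) \<Rightarrow> cell \<Rightarrow> cell" where
  "cell_act \<pi> c = (map \<pi> (fst c), snd c)"

text \<open>Orientation convention: every cell c of dimension M or M-1 carries a chosen
orientation e_c; pi maps e_c to sgn(pi)^(d-1) e_(pi.c), and the cellular boundary of
e_tau (tau an M-cell) is the sum of e_c over the (M-1)-cells c in its boundary.
An integral cochain is given by its values b c = b(e_c).\<close>

definition Mdim :: "nat \<Rightarrow> nat \<Rightarrow> nat" where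
  "Mdim d n = (d - 1) * (n - 1)"

definition cochain_on_act :: "nat \<Rightarrow> (cell \<Rightarrow> int) \<Rightarrow> (nat \<Rightarrow> nat) \<Rightarrow> cell \<Rightarrow> int" where
  "cochain_on_act d b \<pi> c = sign \<pi> ^ (d - 1) * b (cell_act \<pi> c)"

text \<open>Action of pi on Z = H_(M-1)(S(W_n^(d-1))), i.e. multiplication by sgn^(d-1).\<close>
definition Z_act :: "nat \<Rightarrow> (nat \<Rightarrow> nat) \<Rightarrow> int \<Rightarrow> int" where
  "Z_act d \<pi> z = sign \<pi> ^ (d - 1) * z"

definition equivariant_cochain :: "nat \<Rightarrow> nat \<Rightarrow> (cell \<Rightarrow> int) \<Rightarrow> bool" where
  "equivariant_cochain d n b \<longleftrightarrow>
     (\<forall>\<pi> c. \<pi> permutes {1..n} \<longrightarrow> c \<in> cells d n \<longrightarrow> cell_dim n c = Mdim d n - 1 \<longrightarrow>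
        cochain_on_act d b \<pi> c = Z_act d \<pi> (b c))"

definition coboundary :: "nat \<Rightarrow> nat \<Rightarrow> (cell \<Rightarrow> int) \<Rightarrow> cell \<Rightarrow> int" where
  "coboundary d n b \<tau> = (\<Sum>c\<in>{c \<in> cells d n. cell_dim n c = Mdim d n - 1 \<and> face c \<tau>}. b c)"

definition idx_j :: "nat \<Rightarrow> nat \<Rightarrow> nat \<Rightarrow> nat list" where
  "idx_j d n j = (replicate (n - 1) d)[j - 1 := d - 1]"

end

theory Submission
  imports Defs
begin

(* Counting dimensions, the M-cells of X(d,n) are exactly the strings
   (sigma, d...d) and the (M-1)-cells exactly the strings (sigma', i_j) whose index
   list i_j is d everywhere except d-1 in position j.  Unfolding the face relation,
   (sigma', i_j) is a face of (sigma, d...d) iff the first j and the last n-j letters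
   of sigma' each occur in the order they have in sigma, i.e. sigma' is a
   (j, n-j)-shuffle of sigma; such shuffles correspond to j-subsets of the letters,
   so there are (n choose j) of them.  Since every pi permutes the letters and acts on
   both b(c) and the oriented cells by sgn(pi)^(d-1), equivariance makes b invariant
   under relabelling, so b(sigma', i_j) = x_j does not depend on sigma'.  Summing b
   over the faces of an M-cell then gives the sum of x_j * (n choose j). *)

lemma pos_nth:
  assumes "distinct s" "k < length s"
  shows "pos s (s ! k) = k"
  unfolding pos_def by (rule Least_equality) (use assms nth_eq_iff_index_eq in auto)

lemma pos_of_mem:
  assumes "a \<in> set s"
  shows "pos s a < length s" "s ! pos s a = a"
proof -
  obtain k where "k < length s" "s ! k = a" using assms by (auto simp: in_set_conv_nth)
  then show "pos s a < length s" "s ! pos s a = a"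
    unfolding pos_def by (metis (mono_tags, lifting) LeastI)+
qed

lemma pos_eq_iff:
  assumes "a \<in> set s" "b \<in> set s"
  shows "pos s a = pos s b \<longleftrightarrow> a = b"
  using pos_of_mem(2) assms by metis

lemma perm_word_length: "is_perm_word n s \<Longrightarrow> length s = n"
  unfolding is_perm_word_def by (metis card_atLeastAtMost diff_Suc_1 distinct_card)

lemma permutation_between_words:
  assumes "distinct s" "distinct s'" "set s' = set s"
  shows "\<exists>\<pi>. \<pi> permutes set s \<and> map \<pi> s = s'"
proof -
  have len: "length s' = length s" using assms by (metis distinct_card)
  define \<pi> where "\<pi> = permutation_of_list (zip s s')"
  have lp: "list_permutes (zip s s') (set s)"
    using assms len by (simp add: list_permutes_def)
  have "map \<pi> s = s'"
  proof (rule nth_equalityI)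
    fix k assume "k < length (map \<pi> s)"
    then have "(s ! k, s' ! k) \<in> set (zip s s')" using len by (auto simp: in_set_zip)
    then show "map \<pi> s ! k = s' ! k"
      using permutation_of_list_unique[OF lp] \<open>k < _\<close> by (simp add: \<pi>_def)
  qed (simp add: len)
  then show ?thesis using permutation_of_list_permutes[OF lp] unfolding \<pi>_def by blast
qed

section \<open>Index lists of maximal and submaximal sum\<close>

lemma sum_list_ge_length: "\<forall>k\<in>set i. 1 \<le> k \<Longrightarrow> length i \<le> sum_list i"
  by (induction i) auto

lemma sum_list_le_bound: "\<forall>k\<in>set i. k \<le> d \<Longrightarrow> sum_list i \<le> d * length i"
  by (induction i) auto

lemma sum_list_max:
  "\<forall>k\<in>set i. k \<le> d \<Longrightarrow> sum_list i = d * length i \<Longrightarrow> i = replicate (length i) d"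
proof (induction i)
  case (Cons x xs)
  have "sum_list xs \<le> d * length xs" using Cons.prems sum_list_le_bound by auto
  with Cons.prems have "x = d" "sum_list xs = d * length xs" by auto
  then show ?case using Cons by auto
qed simp

lemma sum_list_submax:
  "\<forall>k\<in>set i. k \<le> d \<Longrightarrow> sum_list i + 1 = d * length i \<Longrightarrow>
   \<exists>k<length i. i = (replicate (length i) d)[k := d - 1]"
proof (induction i)
  case (Cons x xs)
  have le: "sum_list xs \<le> d * length xs" using Cons.prems sum_list_le_bound by auto
  show ?case
  proof (cases "x = d")
    case True
    then have "sum_list xs + 1 = d * length xs" using Cons.prems by simp
    with Cons obtain k where "k < length xs" "xs = (replicate (length xs) d)[k := d - 1]"
      by auto
    then show ?thesis using True by (intro exI[of _ "Suc k"]) auto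
  next
    case False
    with Cons.prems le have "x = d - 1" "sum_list xs = d * length xs" by auto
    then have "xs = replicate (length xs) d" using sum_list_max Cons.prems by auto
    then show ?thesis using \<open>x = d - 1\<close> by (intro exI[of _ 0]) simp
  qed
qed simp

lemma sum_list_submax_replicate:
  "d \<ge> 1 \<Longrightarrow> k < m \<Longrightarrow> sum_list ((replicate m d)[k := d - 1]) + 1 = d * m"
proof (induction m arbitrary: k)
  case (Suc m)
  then show ?case by (cases k) (auto simp: sum_list_replicate)
qed simp

lemma Min_window_update_replicate:
  assumes "p < q" "q \<le> m" "e \<le> d"
  shows "Min ((!) ((replicate m d)[c := e]) ` {p..<q}) = (if p \<le> c \<and> c < q then e else d)"
proof -
  let ?f = "(!) ((replicate m d)[c := e])"
  have val: "?f k = (if k = c then e else d)" if "k \<in> {p..<q}" for k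
    using that assms by (auto simp: nth_list_update)
  show ?thesis
  proof (cases "p \<le> c \<and> c < q")
    case True
    then have "e \<in> ?f ` {p..<q}" using val by (metis atLeastLessThan_iff image_eqI)
    moreover have "?f ` {p..<q} \<subseteq> {e, d}" using val by auto
    ultimately show ?thesis using True assms(3) by (intro Min_eqI) auto
  next
    case False
    then have "?f ` {p..<q} = {d}" using val assms(1) by auto
    then show ?thesis by (simp add: if_not_P[OF False])
  qed
qed

lemma idx_j_nth:
  "1 \<le> j \<Longrightarrow> j < n \<Longrightarrow> k < n - 1 \<Longrightarrow> idx_j d n j ! k = (if k = j - 1 then d - 1 else d)"
  unfolding idx_j_def by (auto simp: nth_list_update)

lemma idx_j_inj:
  assumes "d \<ge> 2" "1 \<le> j" "j < n" "1 \<le> j'" "j' < n" "idx_j d n j = idx_j d n j'"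
  shows "j = j'"
proof (rule ccontr)
  assume "j \<noteq> j'"
  then have "idx_j d n j' ! (j - 1) = d" using idx_j_nth assms(2-5) by auto
  moreover have "idx_j d n j ! (j - 1) = d - 1" using idx_j_nth assms(2,3) by auto
  ultimately show False using assms(1,6) by auto
qed

lemma dim_sum_identity: "(d::nat) \<ge> 2 \<Longrightarrow> (d - 1) * (n - 1) + (n - 1) = d * (n - 1)"
  by (cases d) auto

lemma top_cell:
  assumes "d \<ge> 2" "n \<ge> 2" "(\<sigma>, i) \<in> cells d n" "cell_dim n (\<sigma>, i) = Mdim d n"
  shows "is_perm_word n \<sigma>" "i = replicate (n - 1) d"
proof -
  have i: "length i = n - 1" "\<forall>k\<in>set i. 1 \<le> k \<and> k \<le> d" and \<sigma>: "is_perm_word n \<sigma>"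
    using assms(3) unfolding cells_def by auto
  show "is_perm_word n \<sigma>" by (fact \<sigma>)
  have "(d - 1) * (n - 1) \<ge> 1" using assms(1,2) by (simp add: Suc_le_eq)
  moreover have "sum_list i - (n - 1) = (d - 1) * (n - 1)"
    using assms(4) unfolding cell_dim_def Mdim_def by simp
  ultimately have "sum_list i = d * (n - 1)" using dim_sum_identity[OF assms(1), of n] by linarith
  then show "i = replicate (n - 1) d" using sum_list_max[of i d] i by auto
qed

lemma codim_one_cell_iff:
  assumes "d \<ge> 2" "n \<ge> 2"
  shows "(c \<in> cells d n \<and> cell_dim n c = Mdim d n - 1) \<longleftrightarrow>
    (\<exists>j\<in>{1..<n}. \<exists>\<sigma>. is_perm_word n \<sigma> \<and> c = (\<sigma>, idx_j d n j))"
proof -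
  obtain \<sigma> i where c: "c = (\<sigma>, i)" by fastforce
  have dim: "(d - 1) * (n - 1) \<ge> 1" using assms by (simp add: Suc_le_eq)
  have sum: "sum_list i - (n - 1) = (d - 1) * (n - 1) - 1 \<longleftrightarrow> sum_list i + 1 = d * (n - 1)"
    if "length i = n - 1" "\<forall>k\<in>set i. 1 \<le> k"
    using sum_list_ge_length[OF that(2)] that(1) dim dim_sum_identity[OF assms(1), of n] by linarith
  have "c \<in> cells d n \<and> cell_dim n c = Mdim d n - 1 \<longleftrightarrow>
    is_perm_word n \<sigma> \<and> length i = n - 1 \<and> (\<forall>k\<in>set i. 1 \<le> k \<and> k \<le> d) \<and>
    sum_list i + 1 = d * (n - 1)"
    using sum unfolding c cells_def cell_dim_def Mdim_def by auto
  also have "\<dots> \<longleftrightarrow> is_perm_word n \<sigma> \<and> (\<exists>j\<in>{1..<n}. i = idx_j d n j)"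
  proof -
    have "length i = n - 1 \<and> (\<forall>k\<in>set i. 1 \<le> k \<and> k \<le> d) \<and> sum_list i + 1 = d * (n - 1)
      \<longleftrightarrow> (\<exists>j\<in>{1..<n}. i = idx_j d n j)"
    proof
      assume "length i = n - 1 \<and> (\<forall>k\<in>set i. 1 \<le> k \<and> k \<le> d) \<and> sum_list i + 1 = d * (n - 1)"
      then obtain k where "k < n - 1" "i = (replicate (n - 1) d)[k := d - 1]"
        using sum_list_submax[of i d] by auto
      then show "\<exists>j\<in>{1..<n}. i = idx_j d n j"
        by (intro bexI[of _ "k + 1"]) (auto simp: idx_j_def)
    next
      assume "\<exists>j\<in>{1..<n}. i = idx_j d n j"
      then obtain j where j: "j \<in> {1..<n}" "i = idx_j d n j" by blast
      have "set i \<subseteq> insert (d - 1) (set (replicate (n - 1) d))"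
        unfolding j(2) idx_j_def by (rule set_update_subset_insert)
      then show "length i = n - 1 \<and> (\<forall>k\<in>set i. 1 \<le> k \<and> k \<le> d) \<and> sum_list i + 1 = d * (n - 1)"
        using j assms sum_list_submax_replicate[of d "j - 1" "n - 1"] by (auto simp: idx_j_def)
    qed
    then show ?thesis by blast
  qed
  finally show ?thesis unfolding c by auto
qed

section \<open>Faces of an M-cell\<close>

lemma mval_update_replicate:
  assumes "length s = n" "a \<in> set s" "b \<in> set s" "a \<noteq> b" "e \<le> d"
  shows "mval s ((replicate (n - 1) d)[c := e]) a b =
    (if min (pos s a) (pos s b) \<le> c \<and> c < max (pos s a) (pos s b) then e else d)"
proof -
  have "pos s a \<noteq> pos s b" using pos_eq_iff assms by metis
  moreover have "pos s a < n" "pos s b < n" using pos_of_mem assms by auto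
  ultimately show ?thesis
    unfolding mval_def Let_def by (intro Min_window_update_replicate) (use assms in auto)
qed

lemma mval_top:
  assumes "length s = n" "a \<in> set s" "b \<in> set s" "a \<noteq> b"
  shows "mval s (replicate (n - 1) d) a b = d"
proof -
  have "max (pos s a) (pos s b) \<le> n - 1" using pos_of_mem assms by fastforce
  then show ?thesis
    using mval_update_replicate[of s n a b d d "n - 1"] assms by (simp add: list_update_beyond)
qed

lemma mval_idx_j:
  assumes "length s = n" "a \<in> set s" "b \<in> set s" "a \<noteq> b" "1 \<le> j"
  shows "mval s (idx_j d n j) a b =
    (if min (pos s a) (pos s b) < j \<and> j \<le> max (pos s a) (pos s b) then d - 1 else d)"
  using mval_update_replicate[OF assms(1-4), of "d - 1" d "j - 1"] assms(5)
  unfolding idx_j_def by (auto split: if_splits)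

lemma face_codim_one_top_iff_positions:
  assumes "length s = n" "distinct s" "distinct s'" "set s' = set s" "d \<ge> 2" "1 \<le> j"
  shows "face (s', idx_j d n j) (s, replicate (n - 1) d) \<longleftrightarrow>
    (\<forall>a\<in>set s. \<forall>b\<in>set s. before s a b \<longrightarrow> before s' a b \<or> (pos s' b < j \<and> j \<le> pos s' a))"
proof -
  have len': "length s' = n" using assms(1-4) by (metis distinct_card)
  have pointwise:
    "(before s' a b \<and> mval s' (idx_j d n j) a b \<le> mval s (replicate (n - 1) d) a b \<or>
      before s' b a \<and> mval s' (idx_j d n j) a b < mval s (replicate (n - 1) d) a b) \<longleftrightarrow>
     before s' a b \<or> (pos s' b < j \<and> j \<le> pos s' a)"
    if "a \<in> set s" "b \<in> set s" "before s a b" for a b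
  proof -
    have "a \<noteq> b" using that by (auto simp: before_def)
    moreover have "pos s' a \<noteq> pos s' b" using pos_eq_iff[of a s' b] assms(4) that \<open>a \<noteq> b\<close> by auto
    ultimately show ?thesis
      using mval_top[OF assms(1) that(1,2)] mval_idx_j[OF len', of a b j d] assms that
      by (auto simp: before_def)
  qed
  show ?thesis unfolding face_def prod.case using pointwise by blast
qed

lemma positions_condition_iff_nth:
  assumes "distinct s'" "set s' = set s"
  shows "(\<forall>a\<in>set s. \<forall>b\<in>set s. before s a b \<longrightarrow> before s' a b \<or> (pos s' b < j \<and> j \<le> pos s' a))
    \<longleftrightarrow> (\<forall>k l. k < l \<longrightarrow> l < length s' \<longrightarrow> (l < j \<or> j \<le> k) \<longrightarrow> before s (s' ! k) (s' ! l))"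
proof (intro iffI allI impI ballI)
  fix k l
  assume cond: "\<forall>a\<in>set s. \<forall>b\<in>set s. before s a b \<longrightarrow> before s' a b \<or> (pos s' b < j \<and> j \<le> pos s' a)"
    and kl: "k < l" "l < length s'" "l < j \<or> j \<le> k"
  have mem: "s' ! k \<in> set s" "s' ! l \<in> set s" using kl assms(2) by (metis nth_mem order.strict_trans)+
  have pos': "pos s' (s' ! k) = k" "pos s' (s' ! l) = l" using pos_nth assms(1) kl by auto
  then have "s' ! k \<noteq> s' ! l" using kl(1) by (metis less_irrefl)
  then have "pos s (s' ! k) \<noteq> pos s (s' ! l)" using pos_eq_iff mem by metis
  moreover have "\<not> before s (s' ! l) (s' ! k)"
    using cond[rule_format, OF mem(2) mem(1)] pos' kl by (auto simp: before_def)
  ultimately show "before s (s' ! k) (s' ! l)" by (auto simp: before_def)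
next
  fix a b
  assume cond: "\<forall>k l. k < l \<longrightarrow> l < length s' \<longrightarrow> (l < j \<or> j \<le> k) \<longrightarrow> before s (s' ! k) (s' ! l)"
    and ab: "a \<in> set s" "b \<in> set s" "before s a b"
  have "a \<noteq> b" using ab by (auto simp: before_def)
  then have "pos s' a \<noteq> pos s' b" using pos_eq_iff assms(2) ab by metis
  moreover have "pos s' a < length s'" "s' ! pos s' a = a" "pos s' b < length s'" "s' ! pos s' b = b"
    using pos_of_mem assms(2) ab by metis+
  moreover have "\<not> before s b a" using ab by (auto simp: before_def)
  ultimately have "pos s' b < pos s' a \<Longrightarrow> \<not> (pos s' a < j \<or> j \<le> pos s' b)"
    using cond[rule_format, of "pos s' b" "pos s' a"] by auto
  with \<open>pos s' a \<noteq> pos s' b\<close> show "before s' a b \<or> (pos s' b < j \<and> j \<le> pos s' a)"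
    unfolding before_def by linarith
qed

lemma sorted_take_drop_iff:
  "sorted_wrt P (take j xs) \<and> sorted_wrt P (drop j xs) \<longleftrightarrow>
    (\<forall>k l. k < l \<longrightarrow> l < length xs \<longrightarrow> (l < j \<or> j \<le> k) \<longrightarrow> P (xs ! k) (xs ! l))"
proof -
  have take: "sorted_wrt P (take j xs) \<longleftrightarrow>
      (\<forall>k l. k < l \<longrightarrow> l < length xs \<longrightarrow> l < j \<longrightarrow> P (xs ! k) (xs ! l))"
    by (auto simp: sorted_wrt_iff_nth_less)
  have drop: "sorted_wrt P (drop j xs) \<longleftrightarrow>
      (\<forall>k l. k < l \<longrightarrow> l < length xs \<longrightarrow> j \<le> k \<longrightarrow> P (xs ! k) (xs ! l))"
  proof
    assume "sorted_wrt P (drop j xs)"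
    then have drop_nth: "P (xs ! (j + k)) (xs ! (j + l))" if "k < l" "l < length xs - j" for k l
      using that by (auto simp: sorted_wrt_iff_nth_less)
    show "\<forall>k l. k < l \<longrightarrow> l < length xs \<longrightarrow> j \<le> k \<longrightarrow> P (xs ! k) (xs ! l)"
    proof (intro allI impI)
      fix k l assume "k < l" "l < length xs" "j \<le> k"
      then have "P (xs ! (j + (k - j))) (xs ! (j + (l - j)))" by (intro drop_nth) auto
      then show "P (xs ! k) (xs ! l)" using \<open>j \<le> k\<close> \<open>k < l\<close> by simp
    qed
  qed (auto simp: sorted_wrt_iff_nth_less)
  show ?thesis unfolding take drop by blast
qed

definition shuffles_of :: "nat list \<Rightarrow> nat \<Rightarrow> nat list set" where
  "shuffles_of s j = {s'. distinct s' \<and> set s' = set s \<and>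
     sorted_wrt (before s) (take j s') \<and> sorted_wrt (before s) (drop j s')}"

lemma face_codim_one_top_iff_shuffle:
  assumes "length s = n" "distinct s" "distinct s'" "set s' = set s" "d \<ge> 2" "1 \<le> j"
  shows "face (s', idx_j d n j) (s, replicate (n - 1) d) \<longleftrightarrow> s' \<in> shuffles_of s j"
  unfolding face_codim_one_top_iff_positions[OF assms] positions_condition_iff_nth[OF assms(3,4)]
    sorted_take_drop_iff[of "before s" j s', symmetric]
  using assms(3,4) by (simp add: shuffles_of_def)

section \<open>Counting shuffles\<close>

text \<open>A shuffle of s is determined by the set S of its first j letters: it lists S,
  then the remaining letters, each in the order of s.\<close>

definition shuffle_of_subset :: "nat list \<Rightarrow> nat set \<Rightarrow> nat list" where
  "shuffle_of_subset s S = filter (\<lambda>x. x \<in> S) s @ filter (\<lambda>x. x \<notin> S) s"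

lemma sorted_before_filter: "distinct s \<Longrightarrow> sorted_wrt (before s) (filter P s)"
  by (intro sorted_wrt_filter) (simp add: sorted_wrt_iff_nth_less before_def pos_nth)

lemma sorted_before_unique:
  assumes "set xs \<subseteq> set s" "set ys \<subseteq> set s" "set xs = set ys"
    and "sorted_wrt (before s) xs" "sorted_wrt (before s) ys"
  shows "xs = ys"
proof (rule map_sorted_distinct_set_unique[of "pos s"])
  show "inj_on (pos s) (set xs \<union> set ys)"
    using assms(1,2) pos_eq_iff by (intro inj_onI) (metis Un_iff subsetD)
  have "sorted_wrt (<) (map (pos s) xs)" "sorted_wrt (<) (map (pos s) ys)"
    using assms(4,5) unfolding sorted_wrt_map before_def by auto
  then show "sorted (map (pos s) xs)" "distinct (map (pos s) xs)"
    "sorted (map (pos s) ys)" "distinct (map (pos s) ys)"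
    unfolding strict_sorted_iff by auto
qed (fact assms(3))

lemma bij_betw_subsets_shuffles:
  assumes "distinct s" "j \<le> length s"
  shows "bij_betw (shuffle_of_subset s) {S. S \<subseteq> set s \<and> card S = j} (shuffles_of s j)"
proof (rule bij_betw_byWitness[where f' = "\<lambda>s'. set (take j s')"])
  let ?A = "{S. S \<subseteq> set s \<and> card S = j}"
  have len: "length (filter (\<lambda>x. x \<in> S) s) = j" if "S \<in> ?A" for S
  proof -
    have "{x. x \<in> S} \<inter> set s = S" using that by auto
    then show ?thesis using distinct_length_filter[OF assms(1)] that by simp
  qed
  have take_drop: "take j (shuffle_of_subset s S) = filter (\<lambda>x. x \<in> S) s"
    "drop j (shuffle_of_subset s S) = filter (\<lambda>x. x \<notin> S) s" if "S \<in> ?A" for S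
    using len[OF that] unfolding shuffle_of_subset_def by auto
  show "\<forall>S\<in>?A. set (take j (shuffle_of_subset s S)) = S"
    using take_drop by auto
  show "shuffle_of_subset s ` ?A \<subseteq> shuffles_of s j"
    using assms(1) take_drop sorted_before_filter
    by (auto simp: shuffles_of_def shuffle_of_subset_def)
  show "(\<lambda>s'. set (take j s')) ` shuffles_of s j \<subseteq> ?A"
  proof clarify
    fix s' assume "s' \<in> shuffles_of s j"
    then have "distinct s'" "set s' = set s" by (auto simp: shuffles_of_def)
    moreover have "length s' = length s" using calculation assms(1) by (metis distinct_card)
    ultimately show "set (take j s') \<subseteq> set s \<and> card (set (take j s')) = j"
      using assms(2) distinct_card[of "take j s'"] by (auto dest: in_set_takeD)
  qed
  show "\<forall>s'\<in>shuffles_of s j. shuffle_of_subset s (set (take j s')) = s'"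
  proof
    fix s' assume s': "s' \<in> shuffles_of s j"
    let ?S = "set (take j s')"
    have s'_props: "distinct s'" "set s' = set s"
      "sorted_wrt (before s) (take j s')" "sorted_wrt (before s) (drop j s')"
      using s' by (auto simp: shuffles_of_def)
    have "set (take j s') \<inter> set (drop j s') = {}"
      using set_take_disj_set_drop_if_distinct s'_props(1) by fastforce
    moreover have "set (take j s') \<union> set (drop j s') = set s'"
      by (metis append_take_drop_id set_append)
    ultimately have drop_set: "set (drop j s') = set s' - ?S" by blast
    have "take j s' = filter (\<lambda>x. x \<in> ?S) s"
      by (rule sorted_before_unique)
        (use s'_props assms(1) sorted_before_filter in \<open>auto dest: in_set_takeD\<close>)
    moreover have "drop j s' = filter (\<lambda>x. x \<notin> ?S) s"
      by (rule sorted_before_unique)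
        (use s'_props drop_set assms(1) sorted_before_filter in \<open>auto dest: in_set_dropD\<close>)
    ultimately show "shuffle_of_subset s ?S = s'"
      unfolding shuffle_of_subset_def by (metis append_take_drop_id)
  qed
qed

lemma card_shuffles:
  assumes "distinct s" "j \<le> length s"
  shows "finite (shuffles_of s j)" "card (shuffles_of s j) = length s choose j"
proof -
  note bij = bij_betw_subsets_shuffles[OF assms]
  show "finite (shuffles_of s j)" using bij_betw_finite[OF bij] by simp
  show "card (shuffles_of s j) = length s choose j"
    using bij_betw_same_card[OF bij] n_subsets[of "set s" j] distinct_card[OF assms(1)] by simp
qed

lemma codim_one_faces_of_top_cell:
  assumes "d \<ge> 2" "n \<ge> 2" "is_perm_word n \<sigma>"
  shows "{c \<in> cells d n. cell_dim n c = Mdim d n - 1 \<and> face c (\<sigma>, replicate (n - 1) d)} =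
    (\<lambda>(j, s'). (s', idx_j d n j)) ` (SIGMA j:{1..<n}. shuffles_of \<sigma> j)"
proof -
  have \<sigma>: "length \<sigma> = n" "distinct \<sigma>" using assms(3) perm_word_length is_perm_word_def by auto
  have perm_iff: "is_perm_word n s' \<longleftrightarrow> distinct s' \<and> set s' = set \<sigma>" for s'
    using assms(3) unfolding is_perm_word_def by auto
  have face_iff: "face (s', idx_j d n j) (\<sigma>, replicate (n - 1) d) \<longleftrightarrow> s' \<in> shuffles_of \<sigma> j"
    if "is_perm_word n s'" "j \<in> {1..<n}" for s' j
    using face_codim_one_top_iff_shuffle[OF \<sigma>(1,2) _ _ assms(1)] that perm_iff by auto
  show ?thesis
  proof (intro equalityI subsetI)
    fix c assume "c \<in> {c \<in> cells d n. cell_dim n c = Mdim d n - 1 \<and> face c (\<sigma>, replicate (n - 1) d)}"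
    then obtain j s' where "j \<in> {1..<n}" "is_perm_word n s'" "c = (s', idx_j d n j)"
      and "face c (\<sigma>, replicate (n - 1) d)"
      using codim_one_cell_iff[OF assms(1,2)] by blast
    then show "c \<in> (\<lambda>(j, s'). (s', idx_j d n j)) ` (SIGMA j:{1..<n}. shuffles_of \<sigma> j)"
      using face_iff by force
  next
    fix c assume "c \<in> (\<lambda>(j, s'). (s', idx_j d n j)) ` (SIGMA j:{1..<n}. shuffles_of \<sigma> j)"
    then obtain j s' where j: "j \<in> {1..<n}" "s' \<in> shuffles_of \<sigma> j" "c = (s', idx_j d n j)"
      by auto
    then have "is_perm_word n s'" using perm_iff by (simp add: shuffles_of_def)
    then show "c \<in> {c \<in> cells d n. cell_dim n c = Mdim d n - 1 \<and> face c (\<sigma>, replicate (n - 1) d)}"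
      using codim_one_cell_iff[OF assms(1,2)] face_iff j by blast
  qed
qed

lemma coboundary_top_cell:
  assumes "d \<ge> 2" "n \<ge> 2" "is_perm_word n \<sigma>"
  shows "coboundary d n b (\<sigma>, replicate (n - 1) d) =
    (\<Sum>j=1..<n. \<Sum>s'\<in>shuffles_of \<sigma> j. b (s', idx_j d n j))"
proof -
  let ?h = "\<lambda>(j, s'). (s', idx_j d n j)"
  have \<sigma>: "length \<sigma> = n" "distinct \<sigma>" using assms(3) perm_word_length is_perm_word_def by auto
  have inj: "inj_on ?h (SIGMA j:{1..<n}. shuffles_of \<sigma> j)"
    using idx_j_inj[OF assms(1)] by (intro inj_onI) auto
  have "coboundary d n b (\<sigma>, replicate (n - 1) d) =
      (\<Sum>(j, s')\<in>(SIGMA j:{1..<n}. shuffles_of \<sigma> j). b (s', idx_j d n j))"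
    unfolding coboundary_def codim_one_faces_of_top_cell[OF assms] sum.reindex[OF inj]
    by (simp add: case_prod_beta comp_def)
  also have "\<dots> = (\<Sum>j=1..<n. \<Sum>s'\<in>shuffles_of \<sigma> j. b (s', idx_j d n j))"
    using card_shuffles(1)[OF \<sigma>(2)] \<sigma>(1) by (intro sum.Sigma[symmetric]) auto
  finally show ?thesis .
qed

section \<open>Invariance of equivariant cochains\<close>

text \<open>Since pi acts by sgn(pi)^(d-1) both on the orientation and on the coefficients,
  an equivariant cochain takes the same value on a cell and on its relabellings.\<close>

lemma equivariant_cochain_invariant:
  assumes "equivariant_cochain d n b" "\<pi> permutes {1..n}"
    and "c \<in> cells d n" "cell_dim n c = Mdim d n - 1"
  shows "b (cell_act \<pi> c) = b c"
proof -
  have "sign \<pi> ^ (d - 1) * b (cell_act \<pi> c) = sign \<pi> ^ (d - 1) * b c"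
    using assms unfolding equivariant_cochain_def cochain_on_act_def Z_act_def by blast
  then show ?thesis by simp
qed

lemma codim_one_value_independent:
  assumes "d \<ge> 2" "n \<ge> 2" "equivariant_cochain d n b" "j \<in> {1..<n}"
    and "is_perm_word n \<sigma>" "is_perm_word n \<sigma>'"
  shows "b (\<sigma>', idx_j d n j) = b (\<sigma>, idx_j d n j)"
proof -
  obtain \<pi> where \<pi>: "\<pi> permutes set \<sigma>" "map \<pi> \<sigma> = \<sigma>'"
    using permutation_between_words assms(5,6) unfolding is_perm_word_def by metis
  have "(\<sigma>, idx_j d n j) \<in> cells d n \<and> cell_dim n (\<sigma>, idx_j d n j) = Mdim d n - 1"
    using codim_one_cell_iff[OF assms(1,2)] assms(4,5) by blast
  then show ?thesis
    using equivariant_cochain_invariant[OF assms(3), of \<pi>] \<pi> assms(5)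
    by (auto simp: cell_act_def is_perm_word_def)
qed

text \<open>The values x_j are read off at the identity word; on an M-cell the coboundary
  sums x_j once for each of the (n choose j) shuffles.\<close>

theorem lemma4p2:
  fixes d n :: nat and b :: "cell \<Rightarrow> int"
  assumes "d \<ge> 2" and "n \<ge> 2"
    and "equivariant_cochain d n b"
  shows "\<exists>x :: nat \<Rightarrow> int.
           (\<forall>j\<in>{1..<n}. \<forall>\<sigma>. is_perm_word n \<sigma> \<longrightarrow> b (\<sigma>, idx_j d n j) = x j) \<and>
           (\<forall>\<tau>\<in>cells d n. cell_dim n \<tau> = Mdim d n \<longrightarrow>
              coboundary d n b \<tau> = (\<Sum>j=1..<n. x j * int (n choose j)))"
proof -
  define x where "x j = b ([1..<n+1], idx_j d n j)" for j
  have id_word: "is_perm_word n [1..<n+1]" unfolding is_perm_word_def by auto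
  have b_codim_one: "b (\<sigma>, idx_j d n j) = x j" if "j \<in> {1..<n}" "is_perm_word n \<sigma>" for j \<sigma>
    using codim_one_value_independent[OF assms that(1) id_word that(2)] by (simp add: x_def)
  have "coboundary d n b \<tau> = (\<Sum>j=1..<n. x j * int (n choose j))"
    if "\<tau> \<in> cells d n" "cell_dim n \<tau> = Mdim d n" for \<tau>
  proof -
    obtain \<sigma> i where \<tau>: "\<tau> = (\<sigma>, i)" by fastforce
    have \<sigma>: "is_perm_word n \<sigma>" "i = replicate (n - 1) d"
      using top_cell[OF assms(1,2)] that unfolding \<tau> by blast+
    have len: "length \<sigma> = n" "distinct \<sigma>" using \<sigma>(1) perm_word_length is_perm_word_def by auto
    have "coboundary d n b \<tau> = (\<Sum>j=1..<n. \<Sum>s'\<in>shuffles_of \<sigma> j. x j)"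
      unfolding \<tau> \<sigma>(2) coboundary_top_cell[OF assms(1,2) \<sigma>(1)] using b_codim_one \<sigma>(1)
      by (intro sum.cong refl) (auto simp: shuffles_of_def is_perm_word_def)
    also have "\<dots> = (\<Sum>j=1..<n. x j * int (n choose j))"
      using card_shuffles(2)[OF len(2)] len(1) by (intro sum.cong refl) (simp add: mult.commute)
    finally show ?thesis .
  qed
  then show ?thesis using b_codim_one by blast
qed

end
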